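(* Let $\mathcal{C}$, $C_0=\{c_0\}$, $f$ and $r$ be as in the context. Fix $\lambda\in[0,1]$, a random trip-detail variable $X$ with distribution $P$, a real-valued measurable function $u(X)$, and a conditional distribution of the realized fare $p'\ge0$ given $X$ (all expectations below assumed finite). Let $V^*:\mathcal C\to\mathbb{R}$ and $V^*_c(p',C)$ satisfy, for all $C\in\mathcal C$ and $p'\ge0$, $$V^*_c(p',C)=\max_{c\in C}\{r(p',c)+V^*(f(C,c))\},$$ $$V^*(C)=V^*(f(C))+\lambda\,\mathbb{E}_X\Big[\max\Big(u(X)+\mathbb{E}_{p'\mid X}[V^*_c(p',C)]-V^*(f(C)),\,0\Big)-\max\big(u(X),0\big)\Big],\qquad V^*(C_0)=0.$$ For $C\in\mathcal C$ and a function $g$ of the fare, define $$\mathbb{E}_{x',p'\mid C}\big[I(x'=1)\,g(p')\big]:=\lambda\,\mathbb{E}_X\Big[I\Big(u(X)+\mathbb{E}_{p'\mid X}[V^*_c(p',C)]-V^*(f(C))\ge0\Big)\,\mathbb{E}_{p'\mid X}[g(p')]\Big]$$ (so for $C=C_0$ the indicator is $I(u(X)\ge0)$). Let $V^L,V^U:\mathcal C\to\mathbb{R}$ satisfy $V^L(C_0)=V^U(C_0)=0$ and, for all $C\in\mathcal C$, $$V^L(C)=V^L(f(C))+\mathbb{E}_{x',p'\mid C_0}\big[I(x'=1)\,(V^L_c(p',C)-V^L(f(C)))\big],\quad V^L_c(p',C)=\max_{c\in C}[r(p',c)+V^L(f(C,c))],$$ $$V^U(C)=V^U(f(C))+\mathbb{E}_{x',p'\mid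 C}\big[I(x'=1)\,(V^U_c(p',C)-V^U(f(C)))\big],\quad V^U_c(p',C)=\max_{c\in C}[r(p',c)+V^U(f(C,c))].$$ Then $V^L(C)\le V^*(C)\le V^U(C)$ for all $C\in\mathcal C$.
   Context: A coupon group is a triple $c=\langle v,T,n\rangle\in\mathbb{R}\times\mathbb{N}\times\mathbb{N}^+$ (face value $v$, remaining time to expiration $T$, number of coupons $n$). The default (zero-valued) group is $c_0=\langle 0,0,1\rangle$. A coupon set is a finite set of coupon groups containing $c_0$ in which no two groups have the same pair $(v,T)$; $\mathcal C$ is the set of all coupon sets and $C_0=\{c_0\}$. For a group, $f_c(\langle v,T,n\rangle)=\langle v,T-1,n\rangle$ if $v>0$, $n>0$ and $T\ge 1$, and $f_c(\langle v,T,n\rangle)=c_0$ otherwise. For $C\in\mathcal C$ and $c=\langle v,T,n\rangle\in C$, $f(C,c)=\{f_c(c'):c'\in C\setminus\{c\}\}\cup\{f_c(\langle v,T,n-1\rangle)\}$ and $f(C):=f(C,c_0)$. The redemption value is $r(p',\langle v,T,n\rangle)=\min(v,p')$ for a realized fare $p'\ge 0$. $I(\cdot)$ is the indicator function. $\mathbb{E}_X$ is expectation over $X\sim P$ and $\mathbb{E}_{p'\mid X}$ over the realized fare given $X$. Interpretation: $\lambda$ is the per-time-step probability of a trip demand, $u(X)$ the utility gain from choosing the target mobility service, $V^*$ the optimal (undiscounted) net value of a coupon set, and $x'$ the indicator that a trip is served by the target service in the time step under the optimal policy. *)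

theory Defs
  imports "HOL-Probability.Probability"
begin

type_synonym cgroup = "real \<times> nat \<times> nat"
type_synonym cset = "cgroup set"

definition c0 :: cgroup where "c0 = (0, 0, 1)"

definition C0 :: cset where "C0 = {c0}"

definition coupon_set :: "cset \<Rightarrow> bool" where
  "coupon_set C \<longleftrightarrow> finite C \<and> c0 \<in> C \<and> (\<forall>(v,T,n)\<in>C. n > 0) \<and>
     (\<forall>c\<in>C. \<forall>c'\<in>C. (fst c, fst (snd c)) = (fst c', fst (snd c')) \<longrightarrow> c = c')"

fun fc :: "cgroup \<Rightarrow> cgroup" where
  "fc (v, T, n) = (if v > 0 \<and> n > 0 \<and> T \<ge> 1 then (v, T - 1, n) else c0)"

fun fCc :: "cset \<Rightarrow> cgroup \<Rightarrow> cset" where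
  "fCc C (v, T, n) = fc ` (C - {(v, T, n)}) \<union> {fc (v, T, n - 1)}"

definition fC :: "cset \<Rightarrow> cset" where "fC C = fCc C c0"

fun redeem :: "real \<Rightarrow> cgroup \<Rightarrow> real" where
  "redeem p (v, T, n) = min v p"

definition Vc :: "(cset \<Rightarrow> real) \<Rightarrow> real \<Rightarrow> cset \<Rightarrow> real" where
  "Vc V p C = Max ((\<lambda>c. redeem p c + V (fCc C c)) ` C)"

text \<open>E_{x',p'|C}[I(x'=1) g(p')] with respect to the optimal value Vs.\<close>
definition Ex1 :: "real \<Rightarrow> 'x measure \<Rightarrow> ('x \<Rightarrow> real measure) \<Rightarrow> ('x \<Rightarrow> real)
    \<Rightarrow> (cset \<Rightarrow> real) \<Rightarrow> cset \<Rightarrow> (real \<Rightarrow> real) \<Rightarrow> real" where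
  "Ex1 lam P K u Vs C g =
     lam * (\<integral>x. (if u x + (\<integral>p. Vc Vs p C \<partial>K x) - Vs (fC C) \<ge> 0 then 1 else 0)
                 * (\<integral>p. g p \<partial>K x) \<partial>P)"

end

theory Submission
  imports Defs
begin

(* Well-founded induction over coupon sets: every successor f(C,c) of a coupon set C other than
   C0 is again a coupon set, of strictly smaller total weight, where a group other than c0
   weighs its remaining time plus one. At C the induction hypothesis orders V^L, V^* and V^U at
   all successors, hence orders the continuation values V_c pointwise. Writing
   A = E[V^*_c(p',C) | X] - V^*(f C), the integrand max(u + A, 0) - max(u, 0) of the optimal
   recursion lies between I(u >= 0) A and I(u + A >= 0) A, the indicators of the lower and
   upper recursions; since lambda <= 1, the error in the term V(f C) is not amplified. *)

definition coupon_key :: "cgroup \<Rightarrow> real \<times> nat" where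
  "coupon_key c = (fst c, fst (snd c))"

lemma coupon_set_iff:
  "coupon_set C \<longleftrightarrow> finite C \<and> c0 \<in> C \<and> (\<forall>c\<in>C. snd (snd c) > 0) \<and> inj_on coupon_key C"
  by (auto simp: coupon_set_def inj_on_def coupon_key_def)

lemma fCc_eq_image: "fCc C c = fc ` (C - {c} \<union> {(fst c, fst (snd c), snd (snd c) - 1)})"
  by (cases c) auto

lemma redeem_eq: "redeem p c = min (fst c) p"
  by (cases c) (simp add: redeem.simps)

(* Their tuple patterns make the simplifier split coupon groups into components;
   fCc_eq_image and redeem_eq are used instead. *)
declare fCc.simps [simp del] redeem.simps [simp del]

lemma fc_c0 [simp]: "fc c0 = c0"
  by (simp add: c0_def)

lemma fc_count_pos: "0 < snd (snd (fc c))"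
  by (cases c) (simp add: c0_def)

lemma inj_on_coupon_key_fc_image:
  assumes "inj_on coupon_key A"
  shows "inj_on coupon_key (fc ` A)"
  using assms by (fastforce simp: inj_on_def coupon_key_def c0_def split: if_splits)

lemma inj_on_coupon_key_replace:
  assumes "inj_on coupon_key C" "c \<in> C" "coupon_key c' = coupon_key c"
  shows "inj_on coupon_key (C - {c} \<union> {c'})"
  using assms by (auto simp: inj_on_def)

lemma coupon_set_fCc:
  assumes C: "coupon_set C" and c: "c \<in> C"
  shows "coupon_set (fCc C c)"
proof -
  define c' where "c' = (fst c, fst (snd c), snd (snd c) - 1)"
  have image: "fCc C c = fc ` (C - {c} \<union> {c'})"
    unfolding c'_def by (rule fCc_eq_image)
  have "inj_on coupon_key (C - {c} \<union> {c'})"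
    using C c by (intro inj_on_coupon_key_replace) (auto simp: coupon_set_iff c'_def coupon_key_def)
  moreover have "c0 \<in> fc ` (C - {c} \<union> {c'})"
  proof (cases "c = c0")
    case True
    then show ?thesis by (auto simp: c'_def c0_def image_iff)
  next
    case False
    then show ?thesis using C by (force simp: coupon_set_iff)
  qed
  ultimately show ?thesis
    using C unfolding coupon_set_iff image
    by (simp add: fc_count_pos inj_on_coupon_key_fc_image del: Un_insert_right)
qed

definition coupon_weight :: "cgroup \<Rightarrow> nat" where
  "coupon_weight c = (if c = c0 then 0 else Suc (fst (snd c)))"

lemma coupon_weight_fc_le: "coupon_weight (fc c) \<le> fst (snd c)"
  by (cases c) (auto simp: coupon_weight_def)

lemma coupon_weight_ge: "fst (snd c) \<le> coupon_weight c"
  by (auto simp: coupon_weight_def c0_def)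

lemma sum_coupon_weight_fCc_less:
  assumes C: "coupon_set C" and c: "c \<in> C" and "C \<noteq> C0"
  shows "(\<Sum>d\<in>fCc C c. coupon_weight d) < (\<Sum>d\<in>C. coupon_weight d)"
proof -
  define c' where "c' = (fst c, fst (snd c), snd (snd c) - 1)"
  have fin: "finite C" and c0: "c0 \<in> C" using C by (auto simp: coupon_set_iff)
  obtain d where d: "d \<in> C" "d \<noteq> c0" using \<open>C \<noteq> C0\<close> c0 by (auto simp: C0_def)
  have "(\<Sum>d\<in>fCc C c. coupon_weight d) \<le> (\<Sum>d\<in>C - {c} \<union> {c'}. coupon_weight (fc d))"
    unfolding fCc_eq_image c'_def[symmetric]
    using fin sum_image_le[of "C - {c} \<union> {c'}" coupon_weight fc] by (simp add: o_def)
  also have "\<dots> \<le> (\<Sum>d\<in>C - {c}. coupon_weight (fc d)) + coupon_weight (fc c')"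
    using fin by (simp add: sum.insert_if)
  also have "\<dots> \<le> (\<Sum>d\<in>C - {c}. fst (snd d)) + fst (snd c)"
    using coupon_weight_fc_le[of c'] by (intro add_mono sum_mono coupon_weight_fc_le) (simp add: c'_def)
  also have "\<dots> = (\<Sum>d\<in>C. fst (snd d))"
    using fin c by (simp add: sum.remove)
  also have "\<dots> < (\<Sum>d\<in>C. coupon_weight d)"
    using fin d coupon_weight_ge by (intro sum_strict_mono_ex1) (auto simp: coupon_weight_def)
  finally show ?thesis .
qed

lemma coupon_set_induct [consumes 1, case_names C0 step]:
  assumes "coupon_set C"
    and "Q C0"
    and "\<And>C. coupon_set C \<Longrightarrow> C \<noteq> C0 \<Longrightarrow> (\<And>c. c \<in> C \<Longrightarrow> Q (fCc C c)) \<Longrightarrow> Q C"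
  shows "Q C"
  using assms(1)
proof (induction C rule: measure_induct_rule[of "\<lambda>C. \<Sum>d\<in>C. coupon_weight d"])
  case (less C)
  show ?case
    using assms(2,3) less coupon_set_fCc sum_coupon_weight_fCc_less by (cases "C = C0") auto
qed

definition Vc_bound :: "(cset \<Rightarrow> real) \<Rightarrow> cset \<Rightarrow> real" where
  "Vc_bound V C = (\<Sum>c\<in>C. \<bar>fst c\<bar> + \<bar>V (fCc C c)\<bar>)"

lemma abs_Vc_le_Vc_bound:
  assumes "finite C" "C \<noteq> {}" "0 \<le> p"
  shows "\<bar>Vc V p C\<bar> \<le> Vc_bound V C"
proof -
  have "Vc V p C \<in> (\<lambda>c. redeem p c + V (fCc C c)) ` C"
    unfolding Vc_def using assms by (intro Max_in) auto
  then obtain c where c: "c \<in> C" "Vc V p C = redeem p c + V (fCc C c)"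
    by blast
  have "\<bar>Vc V p C\<bar> \<le> \<bar>fst c\<bar> + \<bar>V (fCc C c)\<bar>"
    using c \<open>0 \<le> p\<close> by (auto simp: redeem_eq)
  also have "\<dots> \<le> Vc_bound V C"
    unfolding Vc_bound_def using assms c by (intro member_le_sum) auto
  finally show ?thesis .
qed

lemma borel_measurable_Vc [measurable]:
  "finite C \<Longrightarrow> (\<lambda>p. Vc V p C) \<in> borel_measurable borel"
  unfolding Vc_def redeem_eq by measurable

lemma Vc_mono:
  assumes "finite C" "\<And>c. c \<in> C \<Longrightarrow> V (fCc C c) \<le> W (fCc C c)"
  shows "Vc V p C \<le> Vc W p C"
proof (cases "C = {}")
  case False
  have "redeem p c + V (fCc C c) \<le> Vc W p C" if "c \<in> C" for c
  proof -
    have "redeem p c + V (fCc C c) \<le> redeem p c + W (fCc C c)"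
      using assms(2)[OF that] by simp
    also have "\<dots> \<le> Vc W p C"
      unfolding Vc_def using assms(1) that by (intro Max_ge) auto
    finally show ?thesis .
  qed
  then show ?thesis
    unfolding Vc_def[of V] using assms(1) False by simp
qed (simp add: Vc_def)

lemma fC_C0 [simp]: "fC C0 = C0"
  by (simp add: fC_def C0_def c0_def fCc.simps)

lemma Vc_C0: "0 \<le> p \<Longrightarrow> Vc V p C0 = V C0"
  using fC_C0 by (simp add: Vc_def C0_def c0_def fC_def redeem_eq)

lemma (in prob_space) one_step_comparison:
  fixes f g :: "'a \<Rightarrow> real"
  assumes "0 \<le> lam" "lam \<le> 1" "W \<le> U" "integrable M f" "integrable M g"
    and "\<And>x. x \<in> space M \<Longrightarrow> f x \<le> g x + (U - W)"
  shows "W + lam * (\<integral>x. f x \<partial>M) \<le> U + lam * (\<integral>x. g x \<partial>M)"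
proof -
  have "(\<integral>x. f x \<partial>M) \<le> (\<integral>x. g x + (U - W) \<partial>M)"
    using assms by (intro integral_mono) auto
  also have "\<dots> = (\<integral>x. g x \<partial>M) + (U - W)"
    using assms(5) by (simp add: prob_space)
  finally have "lam * (\<integral>x. f x \<partial>M) \<le> lam * (\<integral>x. g x \<partial>M) + lam * (U - W)"
    using assms(1) by (metis distrib_left mult_left_mono)
  moreover have "lam * (U - W) \<le> U - W"
    using assms(1-3) by (simp add: mult_left_le_one_le)
  ultimately show ?thesis by linarith
qed

lemma max_shift_diff_le: "max (u + a) 0 - max u 0 \<le> (if 0 \<le> u + a then 1 else 0) * (a::real)"
  by (auto simp: max_def)

lemma max_shift_diff_ge: "(if 0 \<le> u then 1 else 0) * a \<le> max (u + a) 0 - max u (0::real)"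
  by (auto simp: max_def)

lemma abs_max_shift_diff_le: "\<bar>max (u + a) 0 - max u 0\<bar> \<le> \<bar>a::real\<bar>"
  by (auto simp: max_def)

locale fare_model = prob_space P for P :: "'x measure" +
  fixes lam :: real and K :: "'x \<Rightarrow> real measure" and u :: "'x \<Rightarrow> real"
  assumes lam_nonneg: "0 \<le> lam" and lam_le_1: "lam \<le> 1"
    and u_measurable [measurable]: "u \<in> borel_measurable P"
    and K_measurable: "K \<in> P \<rightarrow>\<^sub>M prob_algebra borel"
    and fare_nonneg: "\<forall>x\<in>space P. AE p in K x. 0 \<le> p"
begin

lemma prob_space_K: "x \<in> space P \<Longrightarrow> prob_space (K x)"
  and sets_K: "x \<in> space P \<Longrightarrow> sets (K x) = sets borel"
  using measurable_space[OF K_measurable] by (auto simp: space_prob_algebra)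

lemma borel_measurable_kernel_integral [measurable]:
  fixes g :: "real \<Rightarrow> real"
  shows "g \<in> borel_measurable borel \<Longrightarrow> (\<lambda>x. \<integral>p. g p \<partial>K x) \<in> borel_measurable P"
  using measurable_comp[OF measurable_prob_algebraD[OF K_measurable]
      integral_measurable_subprob_algebra[of g]]
  by (simp add: o_def)

lemma
  assumes x: "x \<in> space P" and C: "finite C" "C \<noteq> {}"
  shows integrable_Vc: "integrable (K x) (\<lambda>p. Vc V p C)"
    and abs_kernel_integral_Vc_le: "\<bar>\<integral>p. Vc V p C \<partial>K x\<bar> \<le> Vc_bound V C"
proof -
  interpret K: prob_space "K x" by (rule prob_space_K[OF x])
  have "AE p in K x. 0 \<le> p"
    using fare_nonneg x by blast
  then have bound: "AE p in K x. \<bar>Vc V p C\<bar> \<le> Vc_bound V C"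
    by eventually_elim (rule abs_Vc_le_Vc_bound[OF C])
  show int: "integrable (K x) (\<lambda>p. Vc V p C)"
    using bound C by (intro K.integrable_const_bound[where B="Vc_bound V C"])
      (auto simp: measurable_cong_sets[OF sets_K[OF x] refl])
  have "- Vc_bound V C \<le> (\<integral>p. Vc V p C \<partial>K x)"
    using bound by (intro K.integral_ge_const[OF int]) auto
  moreover have "(\<integral>p. Vc V p C \<partial>K x) \<le> Vc_bound V C"
    using bound by (intro K.integral_le_const[OF int]) auto
  ultimately show "\<bar>\<integral>p. Vc V p C \<partial>K x\<bar> \<le> Vc_bound V C"
    by (simp add: abs_le_iff)
qed

lemma kernel_integral_Vc_mono:
  assumes "x \<in> space P" "finite C" "C \<noteq> {}" "\<And>c. c \<in> C \<Longrightarrow> V (fCc C c) \<le> W (fCc C c)"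
  shows "(\<integral>p. Vc V p C \<partial>K x) \<le> (\<integral>p. Vc W p C \<partial>K x)"
  using assms by (intro integral_mono integrable_Vc Vc_mono) auto

lemma kernel_integral_Vc_diff:
  assumes "x \<in> space P" "finite C" "C \<noteq> {}"
  shows "(\<integral>p. Vc V p C - a \<partial>K x) = (\<integral>p. Vc V p C \<partial>K x) - a"
proof -
  interpret K: prob_space "K x" by (rule prob_space_K[OF assms(1)])
  show ?thesis
    using integrable_Vc[OF assms] by (simp add: K.prob_space)
qed

lemma integrable_dominated_by_continuation:
  assumes C: "finite C" "C \<noteq> {}" and f: "f \<in> borel_measurable P"
    and dom: "\<And>x. x \<in> space P \<Longrightarrow> \<bar>f x\<bar> \<le> \<bar>(\<integral>p. Vc V p C \<partial>K x) - a\<bar>"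
  shows "integrable P f"
proof (rule integrable_const_bound[OF AE_I2 f])
  fix x assume x: "x \<in> space P"
  show "norm (f x) \<le> Vc_bound V C + \<bar>a\<bar>"
    using dom[OF x] abs_kernel_integral_Vc_le[OF x C, of V] by simp
qed

lemma Ex1_C0:
  assumes "Vs C0 = 0"
  shows "Ex1 lam P K u Vs C0 g = lam * (\<integral>x. (if 0 \<le> u x then 1 else 0) * (\<integral>p. g p \<partial>K x) \<partial>P)"
proof -
  have "(\<integral>p. Vc Vs p C0 \<partial>K x) = 0" if "x \<in> space P" for x
  proof (rule integral_eq_zero_AE)
    show "AE p in K x. Vc Vs p C0 = 0"
      using fare_nonneg that assms by (auto simp: Vc_C0)
  qed
  then show ?thesis
    unfolding Ex1_def using assms by (simp cong: Bochner_Integration.integral_cong)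
qed

lemma Vs_le_VU_step:
  fixes Vs VU :: "cset \<Rightarrow> real"
  assumes C: "coupon_set C"
    and Vs_C: "Vs C = Vs (fC C) + lam * (\<integral>x. max (u x + (\<integral>p. Vc Vs p C \<partial>K x) - Vs (fC C)) 0
                                         - max (u x) 0 \<partial>P)"
    and VU_C: "VU C = VU (fC C) + Ex1 lam P K u Vs C (\<lambda>p. Vc VU p C - VU (fC C))"
    and succ: "\<And>c. c \<in> C \<Longrightarrow> Vs (fCc C c) \<le> VU (fCc C c)"
  shows "Vs C \<le> VU C"
proof -
  have fin: "finite C" and ne: "C \<noteq> {}" and c0: "c0 \<in> C"
    using C by (auto simp: coupon_set_iff)
  define F where "F = fC C"
  define A where "A x = (\<integral>p. Vc Vs p C \<partial>K x) - Vs F" for x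
  define B where "B x = (\<integral>p. Vc VU p C \<partial>K x) - VU F" for x
  have [measurable]: "A \<in> borel_measurable P" "B \<in> borel_measurable P"
    unfolding A_def B_def using fin by measurable
  have F: "Vs F \<le> VU F"
    using succ[OF c0] by (simp add: F_def fC_def)
  have "Vs C = Vs F + lam * (\<integral>x. max (u x + A x) 0 - max (u x) 0 \<partial>P)"
    using Vs_C by (simp add: A_def F_def add_diff_eq)
  moreover have "VU C = VU F + lam * (\<integral>x. (if 0 \<le> u x + A x then 1 else 0) * B x \<partial>P)"
    using VU_C kernel_integral_Vc_diff[OF _ fin ne]
    by (simp add: Ex1_def A_def B_def F_def add_diff_eq cong: Bochner_Integration.integral_cong)
  moreover have "Vs F + lam * (\<integral>x. max (u x + A x) 0 - max (u x) 0 \<partial>P)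
      \<le> VU F + lam * (\<integral>x. (if 0 \<le> u x + A x then 1 else 0) * B x \<partial>P)"
  proof (rule one_step_comparison[OF lam_nonneg lam_le_1 F])
    show "integrable P (\<lambda>x. max (u x + A x) 0 - max (u x) 0)"
      using fin ne abs_max_shift_diff_le
      by (intro integrable_dominated_by_continuation[where V=Vs and a="Vs F"]) (auto simp: A_def)
    show "integrable P (\<lambda>x. (if 0 \<le> u x + A x then 1 else 0) * B x)"
      using fin ne by (intro integrable_dominated_by_continuation[where V=VU and a="VU F"])
        (auto simp: B_def)
    fix x assume x: "x \<in> space P"
    have "A x \<le> B x + (VU F - Vs F)"
      using kernel_integral_Vc_mono[where V=Vs and W=VU, OF x fin ne succ]
      by (simp add: A_def B_def)
    then show "max (u x + A x) 0 - max (u x) 0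
        \<le> (if 0 \<le> u x + A x then 1 else 0) * B x + (VU F - Vs F)"
      using max_shift_diff_le[of "u x" "A x"] F by auto
  qed
  ultimately show ?thesis by simp
qed

lemma VL_le_Vs_step:
  fixes Vs VL :: "cset \<Rightarrow> real"
  assumes C: "coupon_set C" and Vs_C0: "Vs C0 = 0"
    and Vs_C: "Vs C = Vs (fC C) + lam * (\<integral>x. max (u x + (\<integral>p. Vc Vs p C \<partial>K x) - Vs (fC C)) 0
                                         - max (u x) 0 \<partial>P)"
    and VL_C: "VL C = VL (fC C) + Ex1 lam P K u Vs C0 (\<lambda>p. Vc VL p C - VL (fC C))"
    and succ: "\<And>c. c \<in> C \<Longrightarrow> VL (fCc C c) \<le> Vs (fCc C c)"
  shows "VL C \<le> Vs C"
proof -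
  have fin: "finite C" and ne: "C \<noteq> {}" and c0: "c0 \<in> C"
    using C by (auto simp: coupon_set_iff)
  define F where "F = fC C"
  define A where "A x = (\<integral>p. Vc Vs p C \<partial>K x) - Vs F" for x
  define B where "B x = (\<integral>p. Vc VL p C \<partial>K x) - VL F" for x
  have [measurable]: "A \<in> borel_measurable P" "B \<in> borel_measurable P"
    unfolding A_def B_def using fin by measurable
  have F: "VL F \<le> Vs F"
    using succ[OF c0] by (simp add: F_def fC_def)
  have "Vs C = Vs F + lam * (\<integral>x. max (u x + A x) 0 - max (u x) 0 \<partial>P)"
    using Vs_C by (simp add: A_def F_def add_diff_eq)
  moreover have "VL C = VL F + lam * (\<integral>x. (if 0 \<le> u x then 1 else 0) * B x \<partial>P)"
    using VL_C kernel_integral_Vc_diff[OF _ fin ne]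
    by (simp add: Ex1_C0[where Vs=Vs, OF Vs_C0] B_def F_def cong: Bochner_Integration.integral_cong)
  moreover have "VL F + lam * (\<integral>x. (if 0 \<le> u x then 1 else 0) * B x \<partial>P)
      \<le> Vs F + lam * (\<integral>x. max (u x + A x) 0 - max (u x) 0 \<partial>P)"
  proof (rule one_step_comparison[OF lam_nonneg lam_le_1 F])
    show "integrable P (\<lambda>x. (if 0 \<le> u x then 1 else 0) * B x)"
      using fin ne by (intro integrable_dominated_by_continuation[where V=VL and a="VL F"])
        (auto simp: B_def)
    show "integrable P (\<lambda>x. max (u x + A x) 0 - max (u x) 0)"
      using fin ne abs_max_shift_diff_le
      by (intro integrable_dominated_by_continuation[where V=Vs and a="Vs F"]) (auto simp: A_def)
    fix x assume x: "x \<in> space P"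
    have "B x \<le> A x + (Vs F - VL F)"
      using kernel_integral_Vc_mono[where V=VL and W=Vs, OF x fin ne succ]
      by (simp add: A_def B_def)
    then show "(if 0 \<le> u x then 1 else 0) * B x
        \<le> max (u x + A x) 0 - max (u x) 0 + (Vs F - VL F)"
      using max_shift_diff_ge[of "u x" "A x"] F by auto
  qed
  ultimately show ?thesis by simp
qed

end

theorem proposition2:
  fixes lam :: real and P :: "'x measure" and K :: "'x \<Rightarrow> real measure"
    and u :: "'x \<Rightarrow> real" and Vs VL VU :: "cset \<Rightarrow> real"
  assumes lam: "0 \<le> lam" "lam \<le> 1"
    and P: "prob_space P"
    and u: "u \<in> borel_measurable P"
    and K: "K \<in> measurable P (prob_algebra borel)"
    and fare_nonneg: "\<forall>x\<in>space P. AE p in K x. 0 \<le> p"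
    and Vs_C0: "Vs C0 = 0"
    and Vs_eq: "\<forall>C. coupon_set C \<longrightarrow>
        Vs C = Vs (fC C) + lam * (\<integral>x. max (u x + (\<integral>p. Vc Vs p C \<partial>K x) - Vs (fC C)) 0
                                         - max (u x) 0 \<partial>P)"
    and VL_C0: "VL C0 = 0"
    and VL_eq: "\<forall>C. coupon_set C \<longrightarrow>
        VL C = VL (fC C) + Ex1 lam P K u Vs C0 (\<lambda>p. Vc VL p C - VL (fC C))"
    and VU_C0: "VU C0 = 0"
    and VU_eq: "\<forall>C. coupon_set C \<longrightarrow>
        VU C = VU (fC C) + Ex1 lam P K u Vs C (\<lambda>p. Vc VU p C - VU (fC C))"
  shows "\<forall>C. coupon_set C \<longrightarrow> VL C \<le> Vs C \<and> Vs C \<le> VU C"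
proof (intro allI impI)
  interpret fare_model P lam K u
    using P lam u K fare_nonneg by (intro fare_model.intro fare_model_axioms.intro) auto
  fix C assume "coupon_set C"
  then show "VL C \<le> Vs C \<and> Vs C \<le> VU C"
  proof (induction rule: coupon_set_induct)
    case C0
    show ?case using Vs_C0 VL_C0 VU_C0 by simp
  next
    case (step C)
    have "VL C \<le> Vs C"
      using Vs_eq VL_eq step(1,3)
      by (intro VL_le_Vs_step[where Vs=Vs and VL=VL, OF step(1) Vs_C0]) auto
    moreover have "Vs C \<le> VU C"
      using Vs_eq VU_eq step(1,3)
      by (intro Vs_le_VU_step[where Vs=Vs and VU=VU, OF step(1)]) auto
    ultimately show ?case ..
  qed
qed

end
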